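(* Let $L,K,N_t,\tau$ be positive integers. Index users by pairs $(i,j)$ with $i\in\{1,\dots,L\}$ (cell) and $j\in\{1,\dots,K\}$ (user within the cell). For every user $(i,j)$ and every cell $l$, let $\mathbf{h}_{i_jl}\in\mathbb{C}^{N_t}$ be a random vector with distribution $\mathcal{CN}(\mathbf{0},\mathbf{I}_{N_t})$, all these vectors being mutually independent. For each $l$, let $\mathbf{n}_l\in\mathbb{C}^{\tau N_t}$ be a zero-mean random vector with covariance $\sigma_{n_l}^2\mathbf{I}_{\tau N_t}$, independent of all channel vectors and of the other noise vectors. Let $\mathbf{q}_{i_j}\in\mathbb{R}^{\tau}$ be unit-norm pilot sequences, $\mathbf{Q}_{i_j}=\mathbf{q}_{i_j}\otimes\mathbf{I}_{N_t}$, and $\rho_{i_jl_k}=\mathbf{q}_{l_k}^T\mathbf{q}_{i_j}$. Let $\eta_{i_jl}\ge 0$ be real numbers with $\eta_{l_kl}=1$ for all $l,k$. Define the least-squares channel estimate $$\hat{\mathbf{g}}_{l_kl}=\mathbf{h}_{l_kl}+\sum_{(i,j)\neq(l,k)}\eta_{i_jl}\rho_{i_jl_k}\mathbf{h}_{i_jl}+\mathbf{Q}_{l_k}^T\mathbf{n}_l,$$ the constant $\delta_{l_k}=\sum_{i=1}^L\sum_{j=1}^K\eta_{i_jl}^2\rho_{i_jl_k}^2+\sigma_{n_l}^2$, and the MRT precoder $\mathbf{a}_{l_k}=\hat{\mathbf{g}}_{l_kl}/\sqrt{N_t\delta_{l_k}}$. Let $\beta_{l_km}>0$ (large-scale gains),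 $P_{m_n}>0$ (downlink powers) and $\sigma_w^2\ge 0$, and define the achievable SINR of user $(l,k)$ as $$\phi_{l_k,N_t}=\frac{\left(\mathbb{E}\left[\mathbf{h}_{l_kl}^H\mathbf{a}_{l_k}\right]\right)^2\beta_{l_kl}P_{l_k}}{\mathrm{var}\left[\mathbf{h}_{l_kl}^H\mathbf{a}_{l_k}\right]\beta_{l_kl}P_{l_k}+\sum_{(m,n)\neq(l,k)}\mathbb{E}\left[|\mathbf{h}_{l_km}^H\mathbf{a}_{m_n}|^2\right]\beta_{l_km}P_{m_n}+\sigma_w^2},$$ where expectations and variance are over all channel and noise vectors. Then $$\phi_{l_k,N_t}=\frac{\beta_{l_kl}P_{l_k}}{\delta_{l_k}\left[\sum_{(m,n)\neq(l,k)}\frac{\rho_{l_km_n}^2\eta_{l_km}^2\beta_{l_km}P_{m_n}}{\delta_{m_n}}+\frac{1}{N_t}\overline{P}_{lk}\right]},\qquad \overline{P}_{lk}=\sum_{m=1}^L\sum_{n=1}^K\beta_{l_km}P_{m_n}+\sigma_w^2,$$ where $\delta_{m_n}=\sum_{i=1}^L\sum_{j=1}^K\eta_{i_jm}^2\rho_{i_jm_n}^2+\sigma_{n_m}^2$ and $\rho_{l_km_n}=\mathbf{q}_{m_n}^T\mathbf{q}_{l_k}$.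
   Context: Model: an $L$-cell TDD massive MIMO network, each cell having an $N_t$-antenna base station serving $K$ single-antenna users. $\mathbf{h}_{i_jl}$ is the small-scale fading vector from user $j$ of cell $i$ to the base station of cell $l$; $\eta_{i_jl}$ is the effective uplink pilot amplitude of that link (uplink power control makes $\eta_{l_kl}=1$); $\rho_{i_jl_k}$ is the correlation coefficient between pilot sequences. Sums written $\sum_{(m,n)\neq(l,k)}$ range over all $m\in\{1,\dots,L\}$, $n\in\{1,\dots,K\}$ with $(m,n)\neq(l,k)$. *)

theory Defs
  imports "HOL-Probability.Probability"
begin

text \<open>Standard circularly-symmetric complex Gaussian CN(0,1): real and imaginary
parts independent, each N(0,1/2).\<close>
definition cn_std :: "complex measure" where
  "cn_std = distr (density lborel (normal_density 0 (sqrt (1/2)))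
                    \<Otimes>\<^sub>M density lborel (normal_density 0 (sqrt (1/2))))
                 borel (\<lambda>(x, y). Complex x y)"

definition users :: "nat \<Rightarrow> nat \<Rightarrow> (nat \<times> nat) set" where
  "users L K = {1..L} \<times> {1..K}"

text \<open>Random blocks: channel vectors h_{i_j m} (Inl (i,j,m)), each in C^Nt,
and noise vectors n_m (Inr m), each in C^(tau*Nt).\<close>
definition blocks :: "nat \<Rightarrow> nat \<Rightarrow> ((nat \<times> nat \<times> nat) + nat) set" where
  "blocks L K = Inl ` ({1..L} \<times> {1..K} \<times> {1..L}) \<union> Inr ` {1..L}"

definition block_space :: "nat \<Rightarrow> nat \<Rightarrow> ((nat \<times> nat \<times> nat) + nat) \<Rightarrow> (nat \<Rightarrow> complex) measure" where
  "block_space Nt tau b = (case b of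
      Inl _ \<Rightarrow> Pi\<^sub>M {..<Nt} (\<lambda>_. borel)
    | Inr _ \<Rightarrow> Pi\<^sub>M {..<tau * Nt} (\<lambda>_. borel))"

definition block_rv :: "nat \<Rightarrow> nat \<Rightarrow> (nat \<Rightarrow> nat \<Rightarrow> nat \<Rightarrow> nat \<Rightarrow> 'a \<Rightarrow> complex)
    \<Rightarrow> (nat \<Rightarrow> nat \<Rightarrow> 'a \<Rightarrow> complex) \<Rightarrow> ((nat \<times> nat \<times> nat) + nat) \<Rightarrow> 'a \<Rightarrow> (nat \<Rightarrow> complex)" where
  "block_rv Nt tau h nz b \<omega> = (case b of
      Inl (i, j, m) \<Rightarrow> restrict (\<lambda>r. h i j m r \<omega>) {..<Nt}
    | Inr m \<Rightarrow> restrict (\<lambda>a. nz m a \<omega>) {..<tau * Nt})"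

definition rho :: "nat \<Rightarrow> (nat \<Rightarrow> nat \<Rightarrow> nat \<Rightarrow> real) \<Rightarrow> nat \<Rightarrow> nat \<Rightarrow> nat \<Rightarrow> nat \<Rightarrow> real" where
  "rho tau q i j l k = (\<Sum>t<tau. q l k t * q i j t)"

text \<open>LS channel estimate, component r (0 <= r < Nt):
  h_{l_k l} + sum_{(i,j) ~= (l,k)} eta rho h_{i_j l} + (Q_{l_k}^T n_l), where
  Q = q (x) I_Nt, so (Q^T n)_r = sum_t q_t n_{t*Nt + r}.\<close>
definition ghat where
  "ghat L K Nt tau h nz q eta l k r \<omega> =
     h l k l r \<omega>
   + (\<Sum>(i, j)\<in>users L K - {(l, k)}. complex_of_real (eta i j l * rho tau q i j l k) * h i j l r \<omega>)
   + (\<Sum>t<tau. complex_of_real (q l k t) * nz l (t * Nt + r) \<omega>)"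

definition delta where
  "delta L K tau q (eta :: nat \<Rightarrow> nat \<Rightarrow> nat \<Rightarrow> real) (sn :: nat \<Rightarrow> real) l k =
     (\<Sum>i=1..L. \<Sum>j=1..K. (eta i j l)\<^sup>2 * (rho tau q i j l k)\<^sup>2) + (sn l)\<^sup>2"

definition precoder where
  "precoder L K Nt tau h nz q eta sn l k r \<omega> =
     ghat L K Nt tau h nz q eta l k r \<omega> / complex_of_real (sqrt (real Nt * delta L K tau q eta sn l k))"

definition hHa where
  "hHa L K Nt tau h nz q eta sn l k m n \<omega> =
     (\<Sum>r<Nt. cnj (h l k m r \<omega>) * precoder L K Nt tau h nz q eta sn m n r \<omega>)"

definition cvar :: "'a measure \<Rightarrow> ('a \<Rightarrow> complex) \<Rightarrow> real" where
  "cvar M X = (\<integral>\<omega>. (cmod (X \<omega> - (\<integral>\<omega>'. X \<omega>' \<partial>M)))\<^sup>2 \<partial>M)"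

definition sinr where
  "sinr M L K Nt tau h nz q eta sn (beta :: nat \<Rightarrow> nat \<Rightarrow> nat \<Rightarrow> real) (P :: nat \<Rightarrow> nat \<Rightarrow> real) (sw2 :: real) l k =
     ((cmod (\<integral>\<omega>. hHa L K Nt tau h nz q eta sn l k l k \<omega> \<partial>M))\<^sup>2 * beta l k l * P l k)
   / (cvar M (hHa L K Nt tau h nz q eta sn l k l k) * beta l k l * P l k
      + (\<Sum>(m, n)\<in>users L K - {(l, k)}.
           (\<integral>\<omega>. (cmod (hHa L K Nt tau h nz q eta sn l k m n \<omega>))\<^sup>2 \<partial>M) * beta l k m * P m n)
      + sw2)"

end

theory Submission
  imports Defs
begin

text \<open>Split the estimate as \<open>ghat\<^sub>m\<^sub>n = c h\<^sub>l\<^sub>k\<^sub>m + W\<close> with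
  \<open>c = eta\<^sub>l\<^sub>k\<^sub>m rho\<^sub>l\<^sub>k\<^sub>m\<^sub>n\<close>: the residual \<open>W\<close> (the other users' channels
  and the projected noise) is independent of \<open>h\<^sub>l\<^sub>k\<^sub>m\<close>, centred and white with
  variance \<open>delta\<^sub>m\<^sub>n - c\<^sup>2\<close>. Together with the complex Gaussian moments
  \<open>E \<parallel>h\<parallel>\<^sup>2 = N\<^sub>t\<close> and \<open>E \<parallel>h\<parallel>\<^sup>4 = N\<^sub>t\<^sup>2 + N\<^sub>t\<close> this gives
  \<open>E (h\<^sup>H ghat) = c N\<^sub>t\<close> and \<open>E |h\<^sup>H ghat|\<^sup>2 = c\<^sup>2 N\<^sub>t\<^sup>2 + N\<^sub>t delta\<^sub>m\<^sub>n\<close>.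
  After normalising the precoder, \<open>|E (h\<^sup>H a)|\<^sup>2 = c\<^sup>2 N\<^sub>t / delta\<^sub>m\<^sub>n\<close> and
  \<open>E |h\<^sup>H a|\<^sup>2 = c\<^sup>2 N\<^sub>t / delta\<^sub>m\<^sub>n + 1\<close>; for the own user \<open>c = 1\<close>, so its variance
  is exactly 1, and substituting into the SINR is a rearrangement.\<close>

section \<open>The standard complex Gaussian\<close>

definition normal_half_var :: "real measure" where
  "normal_half_var = density lborel (normal_density 0 (sqrt (1/2)))"

lemma prob_space_normal_half_var: "prob_space normal_half_var"
  unfolding normal_half_var_def by (rule prob_space_normal_density) simp

lemma integrable_normal_half_var_power: "integrable normal_half_var (\<lambda>x. x ^ k)"
  unfolding normal_half_var_def
  using integrable_normal_moment[of "sqrt (1/2)" 0 k] by (subst integrable_density) auto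

lemma integral_normal_half_var_power:
  "integral\<^sup>L normal_half_var (\<lambda>x. x ^ k) = (\<integral>x. normal_density 0 (sqrt (1/2)) x * x ^ k \<partial>lborel)"
  unfolding normal_half_var_def by (subst integral_density) auto

lemma normal_half_var_moments:
  "integral\<^sup>L normal_half_var (\<lambda>x. x ^ 0) = 1"
  "integral\<^sup>L normal_half_var (\<lambda>x. x ^ 1) = 0"
  "integral\<^sup>L normal_half_var (\<lambda>x. x ^ 2) = 1/2"
  "integral\<^sup>L normal_half_var (\<lambda>x. x ^ 4) = 3/4"
  unfolding integral_normal_half_var_power
  using integral_normal_moment_odd[of "sqrt (1/2)" 0 0]
    integral_normal_moment_even[of "sqrt (1/2)" 0 0] integral_normal_moment_even[of "sqrt (1/2)" 0 1]
    integral_normal_moment_even[of "sqrt (1/2)" 0 2]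
  by (simp_all add: fact_numeral)

lemma (in pair_sigma_finite) integral_mult_fst_snd:
  fixes f g :: "_ \<Rightarrow> real"
  assumes f: "integrable M1 f" and g: "integrable M2 g"
  shows "integrable (M1 \<Otimes>\<^sub>M M2) (\<lambda>x. f (fst x) * g (snd x))"
    and "(\<integral>x. f (fst x) * g (snd x) \<partial>(M1 \<Otimes>\<^sub>M M2)) = integral\<^sup>L M1 f * integral\<^sup>L M2 g"
proof -
  have [measurable]: "f \<in> borel_measurable M1" "g \<in> borel_measurable M2" using f g by auto
  have "(\<integral>\<^sup>+ x. ennreal (norm (f (fst x) * g (snd x))) \<partial>(M1 \<Otimes>\<^sub>M M2))
      = (\<integral>\<^sup>+ x. \<integral>\<^sup>+ y. ennreal (norm (f x)) * ennreal (norm (g y)) \<partial>M2 \<partial>M1)"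
    by (subst M2.nn_integral_fst[symmetric]) (auto simp: abs_mult ennreal_mult)
  also have "\<dots> = (\<integral>\<^sup>+ x. ennreal (norm (f x)) * (\<integral>\<^sup>+ y. ennreal (norm (g y)) \<partial>M2) \<partial>M1)"
    by (intro nn_integral_cong nn_integral_cmult) auto
  also have "\<dots> = (\<integral>\<^sup>+ x. ennreal (norm (f x)) \<partial>M1) * (\<integral>\<^sup>+ y. ennreal (norm (g y)) \<partial>M2)"
    by (rule nn_integral_multc) auto
  also have "\<dots> < \<infinity>"
    using f g unfolding integrable_iff_bounded by (simp add: ennreal_mult_less_top)
  finally show int: "integrable (M1 \<Otimes>\<^sub>M M2) (\<lambda>x. f (fst x) * g (snd x))"
    by (intro integrableI_bounded) auto
  show "(\<integral>x. f (fst x) * g (snd x) \<partial>(M1 \<Otimes>\<^sub>M M2)) = integral\<^sup>L M1 f * integral\<^sup>L M2 g"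
    using integral_fst'[OF int] by simp
qed

interpretation normal_half_var_pair: pair_prob_space normal_half_var normal_half_var
  by (simp add: prob_space_normal_half_var pair_prob_space.intro pair_sigma_finite.intro
      prob_space_imp_sigma_finite)

lemma normal_half_var_pair_monomial:
  "integrable (normal_half_var \<Otimes>\<^sub>M normal_half_var) (\<lambda>p. fst p ^ a * snd p ^ b)"
  "(\<integral>p. fst p ^ a * snd p ^ b \<partial>(normal_half_var \<Otimes>\<^sub>M normal_half_var))
     = integral\<^sup>L normal_half_var (\<lambda>x. x ^ a) * integral\<^sup>L normal_half_var (\<lambda>x. x ^ b)"
  by (rule normal_half_var_pair.integral_mult_fst_snd[OF
        integrable_normal_half_var_power integrable_normal_half_var_power])+

lemma measurable_Complex_pair [measurable]:
  "(\<lambda>p. Complex (fst p) (snd p)) \<in> borel_measurable (normal_half_var \<Otimes>\<^sub>M normal_half_var)"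
proof -
  have "(\<lambda>p. Complex (fst p) (snd p)) = (\<lambda>p. complex_of_real (fst p) + \<i> * complex_of_real (snd p))"
    by (auto simp: complex_eq_iff)
  then show ?thesis unfolding normal_half_var_def by simp
qed

lemma cn_std_eq_distr:
  "cn_std = distr (normal_half_var \<Otimes>\<^sub>M normal_half_var) borel (\<lambda>p. Complex (fst p) (snd p))"
  unfolding cn_std_def normal_half_var_def by (simp add: case_prod_beta')

lemma prob_space_cn_std: "prob_space cn_std"
  unfolding cn_std_eq_distr
  by (rule prob_space.prob_space_distr[OF normal_half_var_pair.P.prob_space_axioms]) simp

lemma sets_cn_std [measurable_cong]: "sets cn_std = sets borel"
  unfolding cn_std_def by simp

lemma integral_cn_std:
  fixes f :: "complex \<Rightarrow> complex"
  assumes "f \<in> borel_measurable borel"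
  shows "integrable cn_std f \<longleftrightarrow>
           integrable (normal_half_var \<Otimes>\<^sub>M normal_half_var) (\<lambda>p. f (Complex (fst p) (snd p)))"
    and "integral\<^sup>L cn_std f =
           (\<integral>p. f (Complex (fst p) (snd p)) \<partial>(normal_half_var \<Otimes>\<^sub>M normal_half_var))"
  unfolding cn_std_eq_distr
  by (rule integrable_distr_eq integral_distr; simp add: assms)+

lemmas cn_std_monomial_intros =
  Bochner_Integration.integrable_add integrable_mult_right integrable_of_real
  normal_half_var_pair_monomial(1)

lemmas cn_std_monomial_simps = normal_half_var_pair_monomial(2) normal_half_var_moments

lemma borel_measurable_cnj [measurable]: "(cnj :: complex \<Rightarrow> complex) \<in> borel_measurable borel"
  by (intro borel_measurable_continuous_onI continuous_intros)

lemma cn_std_mean: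
  "integrable cn_std (\<lambda>z. z)" "integral\<^sup>L cn_std (\<lambda>z. z) = 0"
  "integrable cn_std cnj" "integral\<^sup>L cn_std cnj = 0"
proof -
  have m: "(\<lambda>z::complex. z) \<in> borel_measurable borel" by measurable
  have e: "(\<lambda>p. Complex (fst p) (snd p)) =
      (\<lambda>p. complex_of_real (fst p ^ 1 * snd p ^ 0) + \<i> * complex_of_real (fst p ^ 0 * snd p ^ 1))"
    by (auto simp: complex_eq_iff)
  show int: "integrable cn_std (\<lambda>z. z)"
    unfolding integral_cn_std(1)[OF m] e by (intro cn_std_monomial_intros)
  show mean: "integral\<^sup>L cn_std (\<lambda>z. z) = 0"
    unfolding integral_cn_std(2)[OF m] e
    using normal_half_var_pair_monomial[of 1 0] normal_half_var_pair_monomial[of 0 1]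
      normal_half_var_moments by simp
  then show "integrable cn_std cnj" "integral\<^sup>L cn_std cnj = 0"
    using integrable_cnj[OF int] Bochner_Integration.integral_cnj[of cn_std "\<lambda>z. z"] by simp_all
qed

lemma cn_std_second_moment:
  "integrable cn_std (\<lambda>z. cnj z * z)" "integral\<^sup>L cn_std (\<lambda>z. cnj z * z) = 1"
proof -
  have m: "(\<lambda>z::complex. cnj z * z) \<in> borel_measurable borel" by measurable
  have e: "(\<lambda>p. cnj (Complex (fst p) (snd p)) * Complex (fst p) (snd p)) =
      (\<lambda>p. complex_of_real (fst p ^ 2 * snd p ^ 0) + complex_of_real (fst p ^ 0 * snd p ^ 2))"
    by (auto simp: complex_eq_iff power2_eq_square)
  show "integrable cn_std (\<lambda>z. cnj z * z)"
    unfolding integral_cn_std(1)[OF m] e by (intro cn_std_monomial_intros)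
  show "integral\<^sup>L cn_std (\<lambda>z. cnj z * z) = 1"
    unfolding integral_cn_std(2)[OF m] e
    by (simp add: cn_std_monomial_intros cn_std_monomial_simps
        del: power_0 of_real_mult of_real_power)
qed

lemma cn_std_fourth_moment:
  "integrable cn_std (\<lambda>z. (cnj z * z) * (cnj z * z))"
  "integral\<^sup>L cn_std (\<lambda>z. (cnj z * z) * (cnj z * z)) = 2"
proof -
  have m: "(\<lambda>z::complex. (cnj z * z) * (cnj z * z)) \<in> borel_measurable borel" by measurable
  have e: "(\<lambda>p. (cnj (Complex (fst p) (snd p)) * Complex (fst p) (snd p)) *
                (cnj (Complex (fst p) (snd p)) * Complex (fst p) (snd p))) =
      (\<lambda>p. complex_of_real (fst p ^ 4 * snd p ^ 0) + 2 * complex_of_real (fst p ^ 2 * snd p ^ 2)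
         + complex_of_real (fst p ^ 0 * snd p ^ 4))"
    by (auto simp: complex_eq_iff power2_eq_square algebra_simps power4_eq_xxxx)
  show "integrable cn_std (\<lambda>z. (cnj z * z) * (cnj z * z))"
    unfolding integral_cn_std(1)[OF m] e by (intro cn_std_monomial_intros)
  show "integral\<^sup>L cn_std (\<lambda>z. (cnj z * z) * (cnj z * z)) = 2"
    unfolding integral_cn_std(2)[OF m] e
    by (simp add: cn_std_monomial_intros cn_std_monomial_simps
        del: power_0 of_real_mult of_real_power)
qed

lemma integrable_cn_std_third_moment: "integrable cn_std (\<lambda>z. (cnj z * z) * z)"
proof -
  have m: "(\<lambda>z::complex. (cnj z * z) * z) \<in> borel_measurable borel" by measurable
  have e: "(\<lambda>p. (cnj (Complex (fst p) (snd p)) * Complex (fst p) (snd p)) *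
                Complex (fst p) (snd p)) =
      (\<lambda>p. complex_of_real (fst p ^ 3 * snd p ^ 0) + complex_of_real (fst p ^ 1 * snd p ^ 2)
         + \<i> * complex_of_real (fst p ^ 2 * snd p ^ 1)
         + \<i> * complex_of_real (fst p ^ 0 * snd p ^ 3))"
    by (auto simp: complex_eq_iff power2_eq_square algebra_simps power3_eq_cube)
  show ?thesis unfolding integral_cn_std(1)[OF m] e by (intro cn_std_monomial_intros)
qed

section \<open>Random vectors with independent identically distributed components\<close>

lemma integral_double_sum:
  fixes F :: "'i \<Rightarrow> 'j \<Rightarrow> 'a \<Rightarrow> 'b::{banach, second_countable_topology}"
  assumes "\<And>a b. a \<in> A \<Longrightarrow> b \<in> B \<Longrightarrow> integrable M (F a b)"
  shows "integrable M (\<lambda>\<omega>. \<Sum>a\<in>A. \<Sum>b\<in>B. F a b \<omega>)"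
    and "(\<integral>\<omega>. (\<Sum>a\<in>A. \<Sum>b\<in>B. F a b \<omega>) \<partial>M) = (\<Sum>a\<in>A. \<Sum>b\<in>B. integral\<^sup>L M (F a b))"
  using assms
  by (auto intro!: Bochner_Integration.integrable_sum
           simp: Bochner_Integration.integral_sum Bochner_Integration.integrable_sum)

locale iid_random_vector =
  fixes M :: "'a measure" and X :: "'a \<Rightarrow> 'i \<Rightarrow> 'b::topological_space"
    and I :: "'i set" and \<mu> :: "'b measure"
  assumes finite_index: "finite I"
    and prob_space_law: "prob_space \<mu>"
    and sets_law: "sets \<mu> = sets borel"
    and measurable_vector: "X \<in> measurable M (Pi\<^sub>M I (\<lambda>_. borel))"
    and distr_vector: "distr M (Pi\<^sub>M I (\<lambda>_. borel)) X = Pi\<^sub>M I (\<lambda>_. \<mu>)"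
begin

interpretation law: prob_space \<mu>
  by (rule prob_space_law)

interpretation laws: product_sigma_finite "\<lambda>_. \<mu>"
  by (simp add: product_sigma_finite_def prob_space_imp_sigma_finite prob_space_law)

lemma integral_prod_components:
  fixes F :: "'i \<Rightarrow> 'b \<Rightarrow> 'c::{real_normed_field, banach, second_countable_topology}"
  assumes F: "\<And>i. i \<in> I \<Longrightarrow> integrable \<mu> (F i)"
  shows "integrable M (\<lambda>\<omega>. \<Prod>i\<in>I. F i (X \<omega> i))"
    and "(\<integral>\<omega>. (\<Prod>i\<in>I. F i (X \<omega> i)) \<partial>M) = (\<Prod>i\<in>I. integral\<^sup>L \<mu> (F i))"
proof -
  let ?G = "\<lambda>x. \<Prod>i\<in>I. F i (x i)"
  have G: "?G \<in> borel_measurable (Pi\<^sub>M I (\<lambda>_. borel))"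
  proof (rule borel_measurable_prod)
    fix i assume i: "i \<in> I"
    have "F i \<in> borel_measurable borel"
      using borel_measurable_integrable[OF F[OF i]] measurable_cong_sets[OF sets_law refl] by blast
    then show "(\<lambda>x. F i (x i)) \<in> borel_measurable (Pi\<^sub>M I (\<lambda>_. borel))"
      by (rule measurable_compose[OF measurable_component_singleton[OF i]])
  qed
  have "integrable (Pi\<^sub>M I (\<lambda>_. \<mu>)) ?G"
    by (rule laws.product_integrable_prod[OF finite_index F])
  then show "integrable M (\<lambda>\<omega>. \<Prod>i\<in>I. F i (X \<omega> i))"
    using integrable_distr_eq[OF measurable_vector G] distr_vector by simp
  have "(\<integral>\<omega>. (\<Prod>i\<in>I. F i (X \<omega> i)) \<partial>M) = integral\<^sup>L (Pi\<^sub>M I (\<lambda>_. \<mu>)) ?G"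
    using integral_distr[OF measurable_vector G] distr_vector by simp
  also have "\<dots> = (\<Prod>i\<in>I. integral\<^sup>L \<mu> (F i))"
    by (rule laws.product_integral_prod[OF finite_index F])
  finally show "(\<integral>\<omega>. (\<Prod>i\<in>I. F i (X \<omega> i)) \<partial>M) = (\<Prod>i\<in>I. integral\<^sup>L \<mu> (F i))" .
qed

lemma integral_component:
  fixes f :: "'b \<Rightarrow> 'c::{real_normed_field, banach, second_countable_topology}"
  assumes r: "r \<in> I" and f: "integrable \<mu> f"
  shows "integrable M (\<lambda>\<omega>. f (X \<omega> r))" and "(\<integral>\<omega>. f (X \<omega> r) \<partial>M) = integral\<^sup>L \<mu> f"
proof -
  define F where "F i x = (if i = r then f x else 1)" for i x
  have F: "integrable \<mu> (F i)" for i
    using f by (cases "i = r") (simp_all add: F_def[abs_def])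
  have prod_eq: "(\<Prod>i\<in>I. F i (X \<omega> i)) = f (X \<omega> r)" for \<omega>
    using r finite_index by (simp add: F_def)
  have "integral\<^sup>L \<mu> (F i) = (if i = r then integral\<^sup>L \<mu> f else 1)" for i
    by (simp add: F_def[abs_def] law.prob_space)
  then have integral_eq: "(\<Prod>i\<in>I. integral\<^sup>L \<mu> (F i)) = integral\<^sup>L \<mu> f"
    using r finite_index by simp
  from prod_eq integral_eq show "integrable M (\<lambda>\<omega>. f (X \<omega> r))" "(\<integral>\<omega>. f (X \<omega> r) \<partial>M) = integral\<^sup>L \<mu> f"
    using integral_prod_components[of F, OF F] by simp_all
qed

lemma integral_two_components:
  fixes f g :: "'b \<Rightarrow> 'c::{real_normed_field, banach, second_countable_topology}"
  assumes rs: "r \<in> I" "s \<in> I" "r \<noteq> s" and f: "integrable \<mu> f" and g: "integrable \<mu> g"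
  shows "integrable M (\<lambda>\<omega>. f (X \<omega> r) * g (X \<omega> s))"
    and "(\<integral>\<omega>. f (X \<omega> r) * g (X \<omega> s) \<partial>M) = integral\<^sup>L \<mu> f * integral\<^sup>L \<mu> g"
proof -
  define F where "F i x = (if i = r then f x else if i = s then g x else 1)" for i x
  have F: "integrable \<mu> (F i)" for i
    using f g by (cases "i = r"; cases "i = s") (simp_all add: F_def[abs_def])
  have prod_eq: "(\<Prod>i\<in>I. F i (X \<omega> i)) = f (X \<omega> r) * g (X \<omega> s)" for \<omega>
    using rs finite_index by (simp add: F_def prod.delta_remove)
  have "integral\<^sup>L \<mu> (F i) =
      (if i = r then integral\<^sup>L \<mu> f else if i = s then integral\<^sup>L \<mu> g else 1)" for i
    by (simp add: F_def[abs_def] law.prob_space)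
  then have integral_eq: "(\<Prod>i\<in>I. integral\<^sup>L \<mu> (F i)) = integral\<^sup>L \<mu> f * integral\<^sup>L \<mu> g"
    using rs finite_index by (simp add: prod.delta_remove)
  from prod_eq integral_eq show "integrable M (\<lambda>\<omega>. f (X \<omega> r) * g (X \<omega> s))"
    "(\<integral>\<omega>. f (X \<omega> r) * g (X \<omega> s) \<partial>M) = integral\<^sup>L \<mu> f * integral\<^sup>L \<mu> g"
    using integral_prod_components[of F, OF F] by simp_all
qed

end

section \<open>The system model\<close>

lemma block_index_less: "(t :: nat) < T \<Longrightarrow> r < N \<Longrightarrow> t * N + r < T * N"
proof -
  assume "t < T" "r < N"
  then have "t * N + r < Suc t * N" by simp
  also have "\<dots> \<le> T * N" using \<open>t < T\<close> by (intro mult_right_mono) auto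
  finally show ?thesis .
qed

lemma block_index_eq_iff:
  assumes "r < N" "s < N"
  shows "(t :: nat) * N + r = t' * N + s \<longleftrightarrow> t = t' \<and> r = s"
proof
  assume "t * N + r = t' * N + s"
  then have "(t * N + r) div N = (t' * N + s) div N" "(t * N + r) mod N = (t' * N + s) mod N"
    by simp_all
  then show "t = t' \<and> r = s" using assms by simp
qed auto

locale massive_mimo =
  fixes M :: "'a measure" and L K Nt tau :: nat
    and h :: "nat \<Rightarrow> nat \<Rightarrow> nat \<Rightarrow> nat \<Rightarrow> 'a \<Rightarrow> complex"
    and nz :: "nat \<Rightarrow> nat \<Rightarrow> 'a \<Rightarrow> complex"
    and sn :: "nat \<Rightarrow> real"
    and q eta :: "nat \<Rightarrow> nat \<Rightarrow> nat \<Rightarrow> real"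
  assumes prob_space_M: "prob_space M"
    and indep: "prob_space.indep_vars M (block_space Nt tau) (block_rv Nt tau h nz) (blocks L K)"
    and chan: "\<forall>i\<in>{1..L}. \<forall>j\<in>{1..K}. \<forall>m\<in>{1..L}.
        distr M (Pi\<^sub>M {..<Nt} (\<lambda>_. borel)) (\<lambda>\<omega>. restrict (\<lambda>r. h i j m r \<omega>) {..<Nt})
          = Pi\<^sub>M {..<Nt} (\<lambda>_. cn_std)"
    and noise_mean: "\<forall>m\<in>{1..L}. \<forall>a<tau * Nt.
        integrable M (nz m a) \<and> (\<integral>\<omega>. nz m a \<omega> \<partial>M) = 0"
    and noise_cov: "\<forall>m\<in>{1..L}. \<forall>a<tau * Nt. \<forall>b<tau * Nt.
        integrable M (\<lambda>\<omega>. nz m a \<omega> * cnj (nz m b \<omega>)) \<and>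
        (\<integral>\<omega>. nz m a \<omega> * cnj (nz m b \<omega>) \<partial>M) = (if a = b then complex_of_real ((sn m)\<^sup>2) else 0)"
    and pilots: "\<forall>i\<in>{1..L}. \<forall>j\<in>{1..K}. (\<Sum>t<tau. (q i j t)\<^sup>2) = 1"
    and eta_own: "\<forall>i\<in>{1..L}. \<forall>j\<in>{1..K}. eta i j i = 1"
begin

sublocale prob_space M
  by (rule prob_space_M)

definition block_vector where
  "block_vector A \<omega> = restrict (\<lambda>b. block_rv Nt tau h nz b \<omega>) A"

text \<open>Random variables determined by disjoint sets of blocks are independent; every cross term
  below vanishes for this reason.\<close>

definition determined_by :: "((nat \<times> nat \<times> nat) + nat) set \<Rightarrow> ('a \<Rightarrow> complex) \<Rightarrow> bool" where
  "determined_by A U \<longleftrightarrow>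
     (\<exists>f \<in> borel_measurable (Pi\<^sub>M A (block_space Nt tau)). \<forall>\<omega>\<in>space M. U \<omega> = f (block_vector A \<omega>))"

lemma integral_mult_determined_by_disjoint:
  assumes A: "A1 \<subseteq> blocks L K" "A2 \<subseteq> blocks L K" "A1 \<inter> A2 = {}"
    and U: "determined_by A1 U" "integrable M U"
    and V: "determined_by A2 V" "integrable M V"
  shows "integrable M (\<lambda>\<omega>. U \<omega> * V \<omega>)"
    and "(\<integral>\<omega>. U \<omega> * V \<omega> \<partial>M) = integral\<^sup>L M U * integral\<^sup>L M V"
proof -
  obtain f where f: "f \<in> borel_measurable (Pi\<^sub>M A1 (block_space Nt tau))"
      and Uf: "\<And>\<omega>. \<omega> \<in> space M \<Longrightarrow> U \<omega> = f (block_vector A1 \<omega>)"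
    using U(1) unfolding determined_by_def by blast
  obtain g where g: "g \<in> borel_measurable (Pi\<^sub>M A2 (block_space Nt tau))"
      and Vg: "\<And>\<omega>. \<omega> \<in> space M \<Longrightarrow> V \<omega> = g (block_vector A2 \<omega>)"
    using V(1) unfolding determined_by_def by blast
  have "indep_var (Pi\<^sub>M A1 (block_space Nt tau)) (block_vector A1)
                  (Pi\<^sub>M A2 (block_space Nt tau)) (block_vector A2)"
    unfolding block_vector_def[abs_def] by (rule indep_var_restrict[OF indep A(3) A(1) A(2)])
  then have indep_fg: "indep_var borel (f \<circ> block_vector A1) borel (g \<circ> block_vector A2)"
    by (rule indep_var_compose[OF _ f g])
  have UV: "integrable M (f \<circ> block_vector A1)" "integrable M (g \<circ> block_vector A2)"
    using U(2) V(2) Uf Vg by (auto cong: Bochner_Integration.integrable_cong)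
  have "integrable M (\<lambda>\<omega>. (f \<circ> block_vector A1) \<omega> * (g \<circ> block_vector A2) \<omega>)"
    by (rule indep_var_integrable[OF indep_fg UV])
  then show "integrable M (\<lambda>\<omega>. U \<omega> * V \<omega>)"
    using Uf Vg by (auto cong: Bochner_Integration.integrable_cong)
  have "(\<integral>\<omega>. (f \<circ> block_vector A1) \<omega> * (g \<circ> block_vector A2) \<omega> \<partial>M) =
      integral\<^sup>L M (f \<circ> block_vector A1) * integral\<^sup>L M (g \<circ> block_vector A2)"
    by (rule indep_var_lebesgue_integral[OF indep_fg UV])
  then show "(\<integral>\<omega>. U \<omega> * V \<omega> \<partial>M) = integral\<^sup>L M U * integral\<^sup>L M V"
    using Uf Vg by (simp cong: Bochner_Integration.integral_cong)
qed

lemma determined_by_channel: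
  assumes "Inl (i, j, m) \<in> A" "r < Nt"
  shows "determined_by A (h i j m r)"
  unfolding determined_by_def
proof (intro bexI ballI)
  have "(\<lambda>x. x (Inl (i, j, m))) \<in>
      measurable (Pi\<^sub>M A (block_space Nt tau)) (Pi\<^sub>M {..<Nt} (\<lambda>_. borel))"
    using measurable_component_singleton[OF assms(1), of "block_space Nt tau"]
    by (simp add: block_space_def)
  then show "(\<lambda>x. x (Inl (i, j, m)) r) \<in> borel_measurable (Pi\<^sub>M A (block_space Nt tau))"
    by measurable (simp add: assms(2))
  show "h i j m r \<omega> = block_vector A \<omega> (Inl (i, j, m)) r" for \<omega>
    using assms by (simp add: block_vector_def block_rv_def)
qed

lemma determined_by_noise:
  assumes "Inr m \<in> A" "a < tau * Nt"
  shows "determined_by A (nz m a)"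
  unfolding determined_by_def
proof (intro bexI ballI)
  have "(\<lambda>x. x (Inr m)) \<in>
      measurable (Pi\<^sub>M A (block_space Nt tau)) (Pi\<^sub>M {..<tau * Nt} (\<lambda>_. borel))"
    using measurable_component_singleton[OF assms(1), of "block_space Nt tau"]
    by (simp add: block_space_def)
  then show "(\<lambda>x. x (Inr m) a) \<in> borel_measurable (Pi\<^sub>M A (block_space Nt tau))"
    by measurable (simp add: assms(2))
  show "nz m a \<omega> = block_vector A \<omega> (Inr m) a" for \<omega>
    using assms by (simp add: block_vector_def block_rv_def)
qed

lemma determined_by_const: "determined_by A (\<lambda>_. c)"
  unfolding determined_by_def by (intro bexI[of _ "\<lambda>_. c"]) auto

lemma determined_by_mult:
  assumes "determined_by A U" "determined_by A V"
  shows "determined_by A (\<lambda>\<omega>. U \<omega> * V \<omega>)"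
proof -
  obtain f g where "f \<in> borel_measurable (Pi\<^sub>M A (block_space Nt tau))"
      "g \<in> borel_measurable (Pi\<^sub>M A (block_space Nt tau))"
      "\<forall>\<omega>\<in>space M. U \<omega> = f (block_vector A \<omega>)" "\<forall>\<omega>\<in>space M. V \<omega> = g (block_vector A \<omega>)"
    using assms unfolding determined_by_def by blast
  then show ?thesis
    unfolding determined_by_def by (intro bexI[of _ "\<lambda>x. f x * g x"]) auto
qed

lemma determined_by_add:
  assumes "determined_by A U" "determined_by A V"
  shows "determined_by A (\<lambda>\<omega>. U \<omega> + V \<omega>)"
proof -
  obtain f g where "f \<in> borel_measurable (Pi\<^sub>M A (block_space Nt tau))"
      "g \<in> borel_measurable (Pi\<^sub>M A (block_space Nt tau))"
      "\<forall>\<omega>\<in>space M. U \<omega> = f (block_vector A \<omega>)" "\<forall>\<omega>\<in>space M. V \<omega> = g (block_vector A \<omega>)"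
    using assms unfolding determined_by_def by blast
  then show ?thesis
    unfolding determined_by_def by (intro bexI[of _ "\<lambda>x. f x + g x"]) auto
qed

lemma determined_by_cnj:
  assumes "determined_by A U"
  shows "determined_by A (\<lambda>\<omega>. cnj (U \<omega>))"
proof -
  obtain f where "f \<in> borel_measurable (Pi\<^sub>M A (block_space Nt tau))"
      "\<forall>\<omega>\<in>space M. U \<omega> = f (block_vector A \<omega>)"
    using assms unfolding determined_by_def by blast
  then show ?thesis
    unfolding determined_by_def by (intro bexI[of _ "\<lambda>x. cnj (f x)"]) auto
qed

lemma determined_by_sum:
  "finite S \<Longrightarrow> (\<And>i. i \<in> S \<Longrightarrow> determined_by A (U i)) \<Longrightarrow> determined_by A (\<lambda>\<omega>. \<Sum>i\<in>S. U i \<omega>)"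
proof (induction S rule: finite_induct)
  case empty
  then show ?case using determined_by_const[of A 0] by simp
next
  case (insert x F)
  then show ?case
    unfolding sum.insert[OF insert.hyps] by (intro determined_by_add) auto
qed

lemma users_iff [simp]: "(i, j) \<in> users L K \<longleftrightarrow> i \<in> {1..L} \<and> j \<in> {1..K}"
  by (simp add: users_def)

lemma finite_users: "finite (users L K)"
  by (simp add: users_def)

lemma sum_users: "(\<Sum>b\<in>users L K. f b) = (\<Sum>i=1..L. \<Sum>j=1..K. f (i, j))"
  unfolding users_def by (simp add: sum.cartesian_product)

lemma channel_in_blocks: "(i, j) \<in> users L K \<Longrightarrow> m \<in> {1..L} \<Longrightarrow> Inl (i, j, m) \<in> blocks L K"
  by (force simp: blocks_def)

lemma noise_in_blocks: "m \<in> {1..L} \<Longrightarrow> Inr m \<in> blocks L K"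
  by (auto simp: blocks_def)

lemma iid_channel:
  assumes "(i, j) \<in> users L K" "m \<in> {1..L}"
  shows "iid_random_vector M (\<lambda>\<omega>. restrict (\<lambda>r. h i j m r \<omega>) {..<Nt}) {..<Nt} cn_std"
proof (rule iid_random_vector.intro)
  have "random_variable (block_space Nt tau (Inl (i, j, m))) (block_rv Nt tau h nz (Inl (i, j, m)))"
    using indep channel_in_blocks[OF assms] unfolding indep_vars_def by blast
  then show "(\<lambda>\<omega>. restrict (\<lambda>r. h i j m r \<omega>) {..<Nt}) \<in> measurable M (Pi\<^sub>M {..<Nt} (\<lambda>_. borel))"
    unfolding block_space_def block_rv_def by simp
  show "distr M (Pi\<^sub>M {..<Nt} (\<lambda>_. borel)) (\<lambda>\<omega>. restrict (\<lambda>r. h i j m r \<omega>) {..<Nt}) =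
      Pi\<^sub>M {..<Nt} (\<lambda>_. cn_std)"
    using chan assms by auto
  show "finite {..<Nt}" by simp
  show "prob_space cn_std" by (rule prob_space_cn_std)
  show "sets cn_std = sets borel" by (rule sets_cn_std)
qed

definition channel_gain :: "nat \<Rightarrow> nat \<Rightarrow> nat \<Rightarrow> 'a \<Rightarrow> complex" where
  "channel_gain i j m \<omega> = (\<Sum>r<Nt. cnj (h i j m r \<omega>) * h i j m r \<omega>)"

lemma cnj_channel_gain [simp]: "cnj (channel_gain i j m \<omega>) = channel_gain i j m \<omega>"
  unfolding channel_gain_def by (simp add: mult.commute)

lemma determined_by_channel_gain: "Inl (i, j, m) \<in> A \<Longrightarrow> determined_by A (channel_gain i j m)"
  unfolding channel_gain_def[abs_def]
  by (intro determined_by_sum determined_by_mult determined_by_cnj determined_by_channel) auto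

context
  fixes i j m :: nat
  assumes user: "(i, j) \<in> users L K" and cell: "m \<in> {1..L}"
begin

interpretation channel:
  iid_random_vector M "\<lambda>\<omega>. restrict (\<lambda>r. h i j m r \<omega>) {..<Nt}" "{..<Nt}" cn_std
  by (rule iid_channel[OF user cell])

lemma channel_component:
  fixes f :: "complex \<Rightarrow> complex"
  assumes "r < Nt" "integrable cn_std f"
  shows "integrable M (\<lambda>\<omega>. f (h i j m r \<omega>))" and "(\<integral>\<omega>. f (h i j m r \<omega>) \<partial>M) = integral\<^sup>L cn_std f"
  using channel.integral_component[of r f] assms by simp_all

lemma channel_two_components:
  fixes f g :: "complex \<Rightarrow> complex"
  assumes "r < Nt" "s < Nt" "r \<noteq> s" "integrable cn_std f" "integrable cn_std g"
  shows "integrable M (\<lambda>\<omega>. f (h i j m r \<omega>) * g (h i j m s \<omega>))"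
    and "(\<integral>\<omega>. f (h i j m r \<omega>) * g (h i j m s \<omega>) \<partial>M) = integral\<^sup>L cn_std f * integral\<^sup>L cn_std g"
  using channel.integral_two_components[of r s f g] assms by simp_all

lemma channel_mean:
  assumes "r < Nt"
  shows "integrable M (h i j m r)" "integral\<^sup>L M (h i j m r) = 0"
    and "integrable M (\<lambda>\<omega>. cnj (h i j m r \<omega>))" "(\<integral>\<omega>. cnj (h i j m r \<omega>) \<partial>M) = 0"
  using channel_component[OF assms cn_std_mean(1)] channel_component[OF assms cn_std_mean(3)]
    cn_std_mean(2,4) by simp_all

lemma channel_correlation:
  assumes "r < Nt" "s < Nt"
  shows "integrable M (\<lambda>\<omega>. cnj (h i j m r \<omega>) * h i j m s \<omega>)"
    and "(\<integral>\<omega>. cnj (h i j m r \<omega>) * h i j m s \<omega> \<partial>M) = (if r = s then 1 else 0)"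
  using channel_component[OF assms(1) cn_std_second_moment(1)] cn_std_second_moment(2)
    channel_two_components[OF assms _ cn_std_mean(3) cn_std_mean(1)] cn_std_mean(2,4)
  by (cases "r = s"; simp)+

lemma channel_fourth_moment:
  assumes "r < Nt" "s < Nt"
  shows "integrable M (\<lambda>\<omega>. (cnj (h i j m r \<omega>) * h i j m r \<omega>) * (cnj (h i j m s \<omega>) * h i j m s \<omega>))"
    and "(\<integral>\<omega>. (cnj (h i j m r \<omega>) * h i j m r \<omega>) * (cnj (h i j m s \<omega>) * h i j m s \<omega>) \<partial>M) =
           (if r = s then 2 else 1)"
  using channel_component[OF assms(1) cn_std_fourth_moment(1)] cn_std_fourth_moment(2)
    channel_two_components[OF assms _ cn_std_second_moment(1) cn_std_second_moment(1)]
    cn_std_second_moment(2)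
  by (cases "r = s"; simp)+

lemma integrable_channel_third_moment:
  assumes "r < Nt" "s < Nt"
  shows "integrable M (\<lambda>\<omega>. (cnj (h i j m s \<omega>) * h i j m s \<omega>) * h i j m r \<omega>)"
proof (cases "r = s")
  case True
  then show ?thesis using channel_component(1)[OF assms(1) integrable_cn_std_third_moment] by simp
next
  case False
  then show ?thesis
    using channel_two_components(1)[OF assms(2,1) _ cn_std_second_moment(1) cn_std_mean(1)] by simp
qed

lemma channel_gain_moments:
  "integrable M (channel_gain i j m)" "integral\<^sup>L M (channel_gain i j m) = of_nat Nt"
  "integrable M (\<lambda>\<omega>. channel_gain i j m \<omega> * channel_gain i j m \<omega>)"
  "(\<integral>\<omega>. channel_gain i j m \<omega> * channel_gain i j m \<omega> \<partial>M) = of_nat Nt * of_nat Nt + of_nat Nt"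
proof -
  have square: "channel_gain i j m \<omega> * channel_gain i j m \<omega> =
      (\<Sum>r<Nt. \<Sum>s<Nt. (cnj (h i j m r \<omega>) * h i j m r \<omega>) * (cnj (h i j m s \<omega>) * h i j m s \<omega>))" for \<omega>
    by (simp add: channel_gain_def sum_product)
  show "integrable M (channel_gain i j m)" "integral\<^sup>L M (channel_gain i j m) = of_nat Nt"
    using channel_correlation unfolding channel_gain_def[abs_def]
    by (auto intro!: Bochner_Integration.integrable_sum simp: Bochner_Integration.integral_sum)
  show "integrable M (\<lambda>\<omega>. channel_gain i j m \<omega> * channel_gain i j m \<omega>)"
    unfolding square using channel_fourth_moment(1) by (intro integral_double_sum) simp
  have "(\<integral>\<omega>. channel_gain i j m \<omega> * channel_gain i j m \<omega> \<partial>M) =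
      (\<Sum>r<Nt. \<Sum>s<Nt. (if r = s then 2 else 1 :: complex))"
    unfolding square using channel_fourth_moment by (subst integral_double_sum) simp_all
  also have "\<dots> = (\<Sum>r<Nt. \<Sum>s<Nt. 1 + (if r = s then 1 else 0 :: complex))"
    by (intro sum.cong) auto
  also have "\<dots> = of_nat Nt * of_nat Nt + of_nat Nt"
    by (simp add: sum.distrib algebra_simps)
  finally show "(\<integral>\<omega>. channel_gain i j m \<omega> * channel_gain i j m \<omega> \<partial>M) =
      of_nat Nt * of_nat Nt + of_nat Nt" .
qed

lemma integrable_channel_gain_mult:
  "r < Nt \<Longrightarrow> integrable M (\<lambda>\<omega>. channel_gain i j m \<omega> * h i j m r \<omega>)"
  unfolding channel_gain_def sum_distrib_right using integrable_channel_third_moment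
  by (auto intro!: Bochner_Integration.integrable_sum)

end

lemma channel_distinct_users:
  assumes "b \<in> users L K" "b' \<in> users L K" "b \<noteq> b'" "m \<in> {1..L}" "r < Nt" "s < Nt"
  shows "integrable M (\<lambda>\<omega>. h (fst b) (snd b) m r \<omega> * cnj (h (fst b') (snd b') m s \<omega>))"
    and "(\<integral>\<omega>. h (fst b) (snd b) m r \<omega> * cnj (h (fst b') (snd b') m s \<omega>) \<partial>M) = 0"
proof -
  have blocks: "{Inl (fst b, snd b, m)} \<subseteq> blocks L K" "{Inl (fst b', snd b', m)} \<subseteq> blocks L K"
    "{Inl (fst b, snd b, m)} \<inter> {Inl (fst b', snd b', m)} = {}"
    using assms(1-4) channel_in_blocks[of "fst b" "snd b" m]
      channel_in_blocks[of "fst b'" "snd b'" m]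
    by (auto simp: prod_eq_iff)
  have "determined_by {Inl (fst b, snd b, m)} (h (fst b) (snd b) m r)"
    "determined_by {Inl (fst b', snd b', m)} (\<lambda>\<omega>. cnj (h (fst b') (snd b') m s \<omega>))"
    using assms(5,6) by (auto intro: determined_by_channel determined_by_cnj)
  note product = integral_mult_determined_by_disjoint[OF blocks this(1)
      channel_mean(1)[of "fst b" "snd b" m r] this(2) channel_mean(3)[of "fst b'" "snd b'" m s]]
  show "integrable M (\<lambda>\<omega>. h (fst b) (snd b) m r \<omega> * cnj (h (fst b') (snd b') m s \<omega>))"
    using product(1) assms by simp
  show "(\<integral>\<omega>. h (fst b) (snd b) m r \<omega> * cnj (h (fst b') (snd b') m s \<omega>) \<partial>M) = 0"
    using product(2) channel_mean(2)[of "fst b" "snd b" m r] assms by simp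
qed

lemma channel_cross_correlation:
  assumes "b \<in> users L K" "b' \<in> users L K" "m \<in> {1..L}" "r < Nt" "s < Nt"
  shows "integrable M (\<lambda>\<omega>. h (fst b) (snd b) m r \<omega> * cnj (h (fst b') (snd b') m s \<omega>))"
    and "(\<integral>\<omega>. h (fst b) (snd b) m r \<omega> * cnj (h (fst b') (snd b') m s \<omega>) \<partial>M) =
           (if b = b' \<and> r = s then 1 else 0)"
proof -
  have commute: "(\<lambda>\<omega>. h (fst b) (snd b) m r \<omega> * cnj (h (fst b) (snd b) m s \<omega>)) =
      (\<lambda>\<omega>. cnj (h (fst b) (snd b) m s \<omega>) * h (fst b) (snd b) m r \<omega>)"
    by (simp add: mult.commute)
  show "integrable M (\<lambda>\<omega>. h (fst b) (snd b) m r \<omega> * cnj (h (fst b') (snd b') m s \<omega>))"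
    using assms commute channel_correlation(1)[of "fst b" "snd b" m s r]
      channel_distinct_users(1)[OF assms(1,2) _ assms(3-5)]
    by (cases "b = b'") auto
  show "(\<integral>\<omega>. h (fst b) (snd b) m r \<omega> * cnj (h (fst b') (snd b') m s \<omega>) \<partial>M) =
      (if b = b' \<and> r = s then 1 else 0)"
    using assms commute channel_correlation(2)[of "fst b" "snd b" m s r]
      channel_distinct_users(2)[OF assms(1,2) _ assms(3-5)]
    by (cases "b = b'") auto
qed

definition pilot_noise :: "nat \<Rightarrow> nat \<Rightarrow> nat \<Rightarrow> 'a \<Rightarrow> complex" where
  "pilot_noise m n r \<omega> = (\<Sum>t<tau. complex_of_real (q m n t) * nz m (t * Nt + r) \<omega>)"

lemma determined_by_pilot_noise: "Inr m \<in> A \<Longrightarrow> r < Nt \<Longrightarrow> determined_by A (pilot_noise m n r)"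
  unfolding pilot_noise_def[abs_def]
  by (intro determined_by_sum determined_by_mult determined_by_const determined_by_noise)
     (auto intro: block_index_less)

lemma pilot_noise_mean:
  assumes "m \<in> {1..L}" "r < Nt"
  shows "integrable M (pilot_noise m n r)" "integral\<^sup>L M (pilot_noise m n r) = 0"
proof -
  have "integrable M (nz m (t * Nt + r)) \<and> integral\<^sup>L M (nz m (t * Nt + r)) = 0" if "t < tau" for t
    using noise_mean assms block_index_less[OF that assms(2)] by blast
  then show "integrable M (pilot_noise m n r)" "integral\<^sup>L M (pilot_noise m n r) = 0"
    unfolding pilot_noise_def[abs_def]
    by (auto intro!: Bochner_Integration.integrable_sum simp: Bochner_Integration.integral_sum)
qed

lemma pilot_noise_covariance:
  assumes mn: "(m, n) \<in> users L K" and rs: "r < Nt" "s < Nt"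
  shows "integrable M (\<lambda>\<omega>. pilot_noise m n r \<omega> * cnj (pilot_noise m n s \<omega>))"
    and "(\<integral>\<omega>. pilot_noise m n r \<omega> * cnj (pilot_noise m n s \<omega>) \<partial>M) =
           (if r = s then complex_of_real ((sn m)\<^sup>2) else 0)"
proof -
  define F where "F t t' \<omega> = complex_of_real (q m n t * q m n t') *
      (nz m (t * Nt + r) \<omega> * cnj (nz m (t' * Nt + s) \<omega>))" for t t' \<omega>
  have expand: "pilot_noise m n r \<omega> * cnj (pilot_noise m n s \<omega>) = (\<Sum>t<tau. \<Sum>t'<tau. F t t' \<omega>)" for \<omega>
    unfolding pilot_noise_def F_def by (simp add: sum_product cnj_sum algebra_simps)
  have noise: "integrable M (\<lambda>\<omega>. nz m (t * Nt + r) \<omega> * cnj (nz m (t' * Nt + s) \<omega>)) \<and>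
      (\<integral>\<omega>. nz m (t * Nt + r) \<omega> * cnj (nz m (t' * Nt + s) \<omega>) \<partial>M) =
        (if t = t' \<and> r = s then complex_of_real ((sn m)\<^sup>2) else 0)"
    if "t < tau" "t' < tau" for t t'
    using noise_cov mn block_index_less[OF that(1) rs(1)] block_index_less[OF that(2) rs(2)]
      block_index_eq_iff[OF rs, of t t'] by auto
  then have F: "integrable M (F t t')" if "t \<in> {..<tau}" "t' \<in> {..<tau}" for t t'
    using that unfolding F_def by simp
  show "integrable M (\<lambda>\<omega>. pilot_noise m n r \<omega> * cnj (pilot_noise m n s \<omega>))"
    unfolding expand using F by (rule integral_double_sum)
  have "(\<integral>\<omega>. pilot_noise m n r \<omega> * cnj (pilot_noise m n s \<omega>) \<partial>M) =
      (\<Sum>t<tau. \<Sum>t'<tau. integral\<^sup>L M (F t t'))"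
    unfolding expand by (intro integral_double_sum(2) F)
  also have "\<dots> = (\<Sum>t<tau. \<Sum>t'<tau.
      if t' = t then (if r = s then complex_of_real ((q m n t)\<^sup>2 * (sn m)\<^sup>2) else 0) else 0)"
  proof (intro sum.cong refl)
    fix t t' assume "t \<in> {..<tau}" "t' \<in> {..<tau}"
    then show "integral\<^sup>L M (F t t') =
        (if t' = t then (if r = s then complex_of_real ((q m n t)\<^sup>2 * (sn m)\<^sup>2) else 0) else 0)"
      unfolding F_def using noise[of t t'] by (auto simp: power2_eq_square)
  qed
  also have "\<dots> = (if r = s then complex_of_real ((\<Sum>t<tau. (q m n t)\<^sup>2) * (sn m)\<^sup>2) else 0)"
    by (simp add: sum_distrib_right)
  also have "\<dots> = (if r = s then complex_of_real ((sn m)\<^sup>2) else 0)"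
    using pilots mn by simp
  finally show "(\<integral>\<omega>. pilot_noise m n r \<omega> * cnj (pilot_noise m n s \<omega>) \<partial>M) =
      (if r = s then complex_of_real ((sn m)\<^sup>2) else 0)" .
qed

section \<open>The channel estimate\<close>

definition est_coef :: "nat \<Rightarrow> nat \<Rightarrow> nat \<times> nat \<Rightarrow> real" where
  "est_coef m n b = eta (fst b) (snd b) m * rho tau q (fst b) (snd b) m n"

lemma est_coef_own: "(m, n) \<in> users L K \<Longrightarrow> est_coef m n (m, n) = 1"
  using pilots eta_own by (simp add: est_coef_def rho_def power2_eq_square)

lemma delta_eq_sum_est_coef:
  "delta L K tau q eta sn m n = (\<Sum>b\<in>users L K. (est_coef m n b)\<^sup>2) + (sn m)\<^sup>2"
  by (simp add: delta_def sum_users est_coef_def power_mult_distrib)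

lemma delta_ge_1:
  assumes "(m, n) \<in> users L K"
  shows "1 \<le> delta L K tau q eta sn m n"
proof -
  have "1 = (est_coef m n (m, n))\<^sup>2" using est_coef_own[OF assms] by simp
  also have "\<dots> \<le> (\<Sum>b\<in>users L K. (est_coef m n b)\<^sup>2)"
    using assms finite_users by (intro member_le_sum) auto
  finally show ?thesis
    unfolding delta_eq_sum_est_coef by (metis add_increasing2 zero_le_power2)
qed

definition channel_combination ::
    "(nat \<times> nat) set \<Rightarrow> nat \<Rightarrow> (nat \<times> nat \<Rightarrow> real) \<Rightarrow> nat \<Rightarrow> 'a \<Rightarrow> complex" where
  "channel_combination B m c r \<omega> = (\<Sum>b\<in>B. complex_of_real (c b) * h (fst b) (snd b) m r \<omega>)"

text \<open>By \<open>est_coef_own\<close> the own channel, which enters \<open>ghat\<close> with coefficient 1, fits the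
  same pattern as the other users' channels.\<close>

lemma ghat_eq_channel_combination:
  assumes "(m, n) \<in> users L K"
  shows "ghat L K Nt tau h nz q eta m n r \<omega> =
           channel_combination (users L K) m (est_coef m n) r \<omega> + pilot_noise m n r \<omega>"
proof -
  let ?f = "\<lambda>b. complex_of_real (est_coef m n b) * h (fst b) (snd b) m r \<omega>"
  have "(\<Sum>(i, j)\<in>users L K - {(m, n)}.
           complex_of_real (eta i j m * rho tau q i j m n) * h i j m r \<omega>)
      = (\<Sum>b\<in>users L K - {(m, n)}. ?f b)"
    by (intro sum.cong) (auto simp: est_coef_def)
  then show ?thesis
    using sum.remove[OF finite_users assms, of ?f] est_coef_own[OF assms]
    unfolding ghat_def channel_combination_def pilot_noise_def by simp
qed

lemma determined_by_channel_combination: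
  "(\<And>b. b \<in> B \<Longrightarrow> Inl (fst b, snd b, m) \<in> A) \<Longrightarrow> finite B \<Longrightarrow> r < Nt \<Longrightarrow>
     determined_by A (channel_combination B m c r)"
  unfolding channel_combination_def[abs_def]
  by (intro determined_by_sum determined_by_mult determined_by_const determined_by_channel) auto

lemma channel_combination_mean:
  assumes "B \<subseteq> users L K" "m \<in> {1..L}" "r < Nt"
  shows "integrable M (channel_combination B m c r)"
    and "integral\<^sup>L M (channel_combination B m c r) = 0"
proof -
  have "finite B" using assms(1) finite_users by (rule finite_subset)
  moreover have "integrable M (h (fst b) (snd b) m r) \<and> integral\<^sup>L M (h (fst b) (snd b) m r) = 0"
    if "b \<in> B" for b
    using channel_mean[of "fst b" "snd b" m r] that assms by auto
  ultimately show "integrable M (channel_combination B m c r)"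
      "integral\<^sup>L M (channel_combination B m c r) = 0"
    unfolding channel_combination_def[abs_def]
    by (auto intro!: Bochner_Integration.integrable_sum simp: Bochner_Integration.integral_sum)
qed

lemma channel_combination_covariance:
  assumes B: "B \<subseteq> users L K" and m: "m \<in> {1..L}" and rs: "r < Nt" "s < Nt"
  shows "integrable M (\<lambda>\<omega>. channel_combination B m c r \<omega> * cnj (channel_combination B m c s \<omega>))"
    and "(\<integral>\<omega>. channel_combination B m c r \<omega> * cnj (channel_combination B m c s \<omega>) \<partial>M) =
           (if r = s then complex_of_real (\<Sum>b\<in>B. (c b)\<^sup>2) else 0)"
proof -
  define F where "F b b' \<omega> = complex_of_real (c b * c b') *
      (h (fst b) (snd b) m r \<omega> * cnj (h (fst b') (snd b') m s \<omega>))" for b b' \<omega>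
  have expand: "channel_combination B m c r \<omega> * cnj (channel_combination B m c s \<omega>) =
      (\<Sum>b\<in>B. \<Sum>b'\<in>B. F b b' \<omega>)" for \<omega>
    unfolding channel_combination_def F_def by (simp add: sum_product cnj_sum algebra_simps)
  have pair: "integrable M (\<lambda>\<omega>. h (fst b) (snd b) m r \<omega> * cnj (h (fst b') (snd b') m s \<omega>)) \<and>
      (\<integral>\<omega>. h (fst b) (snd b) m r \<omega> * cnj (h (fst b') (snd b') m s \<omega>) \<partial>M) =
        (if b = b' \<and> r = s then 1 else 0)" if "b \<in> B" "b' \<in> B" for b b'
  proof -
    have "b \<in> users L K" "b' \<in> users L K" using that B by blast+
    then show ?thesis using channel_cross_correlation[of b b' m r s] m rs by blast
  qed
  then have F: "integrable M (F b b')" if "b \<in> B" "b' \<in> B" for b b'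
    using that unfolding F_def by simp
  show "integrable M (\<lambda>\<omega>. channel_combination B m c r \<omega> * cnj (channel_combination B m c s \<omega>))"
    unfolding expand using F by (rule integral_double_sum)
  have "(\<integral>\<omega>. channel_combination B m c r \<omega> * cnj (channel_combination B m c s \<omega>) \<partial>M) =
      (\<Sum>b\<in>B. \<Sum>b'\<in>B. integral\<^sup>L M (F b b'))"
    unfolding expand by (intro integral_double_sum(2) F)
  also have "\<dots> = (\<Sum>b\<in>B. \<Sum>b'\<in>B.
      if b' = b then (if r = s then complex_of_real ((c b)\<^sup>2) else 0) else 0)"
  proof (intro sum.cong refl)
    fix b b' assume "b \<in> B" "b' \<in> B"
    then show "integral\<^sup>L M (F b b') =
        (if b' = b then (if r = s then complex_of_real ((c b)\<^sup>2) else 0) else 0)"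
      unfolding F_def using pair[of b b'] by (auto simp: power2_eq_square)
  qed
  also have "\<dots> = (if r = s then complex_of_real (\<Sum>b\<in>B. (c b)\<^sup>2) else 0)"
    using finite_subset[OF B finite_users] by simp
  finally show "(\<integral>\<omega>. channel_combination B m c r \<omega> * cnj (channel_combination B m c s \<omega>) \<partial>M) =
      (if r = s then complex_of_real (\<Sum>b\<in>B. (c b)\<^sup>2) else 0)" .
qed

text \<open>The part of the estimate \<open>ghat\<^sub>m\<^sub>n\<close> that is independent of the channel \<open>h\<^sub>l\<^sub>k\<^sub>m\<close>.\<close>

definition est_residual :: "nat \<Rightarrow> nat \<Rightarrow> nat \<Rightarrow> nat \<Rightarrow> nat \<Rightarrow> 'a \<Rightarrow> complex" where
  "est_residual l k m n r \<omega> =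
     channel_combination (users L K - {(l, k)}) m (est_coef m n) r \<omega> + pilot_noise m n r \<omega>"

lemma ghat_split:
  assumes "(l, k) \<in> users L K" "(m, n) \<in> users L K"
  shows "ghat L K Nt tau h nz q eta m n r \<omega> =
           complex_of_real (est_coef m n (l, k)) * h l k m r \<omega> + est_residual l k m n r \<omega>"
  using sum.remove[OF finite_users assms(1),
      of "\<lambda>b. complex_of_real (est_coef m n b) * h (fst b) (snd b) m r \<omega>"]
  unfolding ghat_eq_channel_combination[OF assms(2)] est_residual_def channel_combination_def
  by simp

lemma determined_by_est_residual:
  assumes "m \<in> {1..L}" "r < Nt"
  shows "determined_by (blocks L K - {Inl (l, k, m)}) (est_residual l k m n r)"
  unfolding est_residual_def[abs_def]
proof (intro determined_by_add)
  show "determined_by (blocks L K - {Inl (l, k, m)})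
      (channel_combination (users L K - {(l, k)}) m (est_coef m n) r)"
    using assms finite_users channel_in_blocks
    by (intro determined_by_channel_combination) (auto simp: prod_eq_iff)
  show "determined_by (blocks L K - {Inl (l, k, m)}) (pilot_noise m n r)"
    using assms noise_in_blocks by (intro determined_by_pilot_noise) auto
qed

lemma est_residual_mean:
  assumes "m \<in> {1..L}" "r < Nt"
  shows "integrable M (est_residual l k m n r)" "integral\<^sup>L M (est_residual l k m n r) = 0"
  using channel_combination_mean[of "users L K - {(l, k)}" m r "est_coef m n"]
    pilot_noise_mean[of m r n] assms unfolding est_residual_def[abs_def] by auto

lemma est_residual_covariance:
  assumes lk: "(l, k) \<in> users L K" and mn: "(m, n) \<in> users L K" and rs: "r < Nt" "s < Nt"
  shows "integrable M (\<lambda>\<omega>. est_residual l k m n r \<omega> * cnj (est_residual l k m n s \<omega>))"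
    and "(\<integral>\<omega>. est_residual l k m n r \<omega> * cnj (est_residual l k m n s \<omega>) \<partial>M) =
           (if r = s then complex_of_real (delta L K tau q eta sn m n - (est_coef m n (l, k))\<^sup>2)
            else 0)"
proof -
  let ?B = "users L K - {(l, k)}"
  let ?C = "channel_combination ?B m (est_coef m n)" and ?N = "pilot_noise m n"
  let ?A = "(\<lambda>b. Inl (fst b, snd b, m)) ` ?B"
  have m: "m \<in> {1..L}" using mn by simp
  have blocks: "?A \<subseteq> blocks L K" "{Inr m} \<subseteq> blocks L K" "?A \<inter> {Inr m} = {}"
    using channel_in_blocks m noise_in_blocks by auto
  have det: "determined_by ?A (?C t)" "determined_by {Inr m} (?N t)" if "t < Nt" for t
    using that finite_users
    by (auto intro: determined_by_channel_combination determined_by_pilot_noise)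
  note C = channel_combination_mean[OF _ m, of ?B] and N = pilot_noise_mean[OF m, of _ n]
  have CN: "integrable M (\<lambda>\<omega>. ?C r \<omega> * cnj (?N s \<omega>)) \<and> (\<integral>\<omega>. ?C r \<omega> * cnj (?N s \<omega>) \<partial>M) = 0"
    using integral_mult_determined_by_disjoint[OF blocks det(1)[OF rs(1)] C(1)[OF _ rs(1)]
        determined_by_cnj[OF det(2)[OF rs(2)]] integrable_cnj[OF N(1)[OF rs(2)]]]
      C(2)[OF _ rs(1)] by auto
  have NC: "integrable M (\<lambda>\<omega>. ?N r \<omega> * cnj (?C s \<omega>)) \<and> (\<integral>\<omega>. ?N r \<omega> * cnj (?C s \<omega>) \<partial>M) = 0"
    using integral_mult_determined_by_disjoint[OF blocks(2,1) _ det(2)[OF rs(1)] N(1)[OF rs(1)]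
        determined_by_cnj[OF det(1)[OF rs(2)]] integrable_cnj[OF C(1)[OF _ rs(2)]]]
      blocks(3) N(2)[OF rs(1)] by auto
  have expand: "est_residual l k m n r \<omega> * cnj (est_residual l k m n s \<omega>) =
      ?C r \<omega> * cnj (?C s \<omega>) + ?C r \<omega> * cnj (?N s \<omega>) + ?N r \<omega> * cnj (?C s \<omega>) + ?N r \<omega> * cnj (?N s \<omega>)"
    for \<omega> unfolding est_residual_def by (simp add: algebra_simps)
  have "complex_of_real (\<Sum>b\<in>?B. (est_coef m n b)\<^sup>2) + complex_of_real ((sn m)\<^sup>2) =
      complex_of_real (delta L K tau q eta sn m n - (est_coef m n (l, k))\<^sup>2)"
    using sum.remove[OF finite_users lk, of "\<lambda>b. (est_coef m n b)\<^sup>2"]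
    unfolding delta_eq_sum_est_coef by simp
  then show "integrable M (\<lambda>\<omega>. est_residual l k m n r \<omega> * cnj (est_residual l k m n s \<omega>))"
    "(\<integral>\<omega>. est_residual l k m n r \<omega> * cnj (est_residual l k m n s \<omega>) \<partial>M) =
      (if r = s then complex_of_real (delta L K tau q eta sn m n - (est_coef m n (l, k))\<^sup>2) else 0)"
    unfolding expand
    using CN NC channel_combination_covariance[OF _ m rs, where B = ?B and c = "est_coef m n"]
      pilot_noise_covariance[OF mn rs]
    by (auto simp del: of_real_sum of_real_power)
qed

section \<open>Moments of the received gains\<close>

definition residual_inner :: "nat \<Rightarrow> nat \<Rightarrow> nat \<Rightarrow> nat \<Rightarrow> 'a \<Rightarrow> complex" where
  "residual_inner l k m n \<omega> = (\<Sum>r<Nt. cnj (h l k m r \<omega>) * est_residual l k m n r \<omega>)"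

context
  fixes l k m n :: nat
  assumes lk: "(l, k) \<in> users L K" and mn: "(m, n) \<in> users L K"
begin

lemma m_cell: "m \<in> {1..L}"
  using mn by simp

lemma channel_vs_residual_blocks:
  "{Inl (l, k, m)} \<subseteq> blocks L K" "blocks L K - {Inl (l, k, m)} \<subseteq> blocks L K"
  "{Inl (l, k, m)} \<inter> (blocks L K - {Inl (l, k, m)}) = {}"
  using channel_in_blocks[OF lk m_cell] by auto

lemmas integral_mult_channel_residual =
  integral_mult_determined_by_disjoint[OF channel_vs_residual_blocks]

lemma channel_residual_products:
  assumes r: "r < Nt"
  shows "integrable M (\<lambda>\<omega>. cnj (h l k m r \<omega>) * est_residual l k m n r \<omega>) \<and>
           (\<integral>\<omega>. cnj (h l k m r \<omega>) * est_residual l k m n r \<omega> \<partial>M) = 0"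
    and "integrable M (\<lambda>\<omega>. (channel_gain l k m \<omega> * h l k m r \<omega>) * cnj (est_residual l k m n r \<omega>)) \<and>
           (\<integral>\<omega>. (channel_gain l k m \<omega> * h l k m r \<omega>) * cnj (est_residual l k m n r \<omega>) \<partial>M) = 0"
    and "integrable M (\<lambda>\<omega>. (channel_gain l k m \<omega> * cnj (h l k m r \<omega>)) * est_residual l k m n r \<omega>) \<and>
           (\<integral>\<omega>. (channel_gain l k m \<omega> * cnj (h l k m r \<omega>)) * est_residual l k m n r \<omega> \<partial>M) = 0"
proof -
  let ?W = "est_residual l k m n r" and ?g = "channel_gain l k m"
  have det_h: "determined_by {Inl (l, k, m)} (h l k m r)"
    using r by (auto intro: determined_by_channel)
  have det_g: "determined_by {Inl (l, k, m)} ?g"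
    by (auto intro: determined_by_channel_gain)
  note det_W = determined_by_est_residual[OF m_cell r] and W = est_residual_mean[OF m_cell r]
  have gh: "integrable M (\<lambda>\<omega>. ?g \<omega> * h l k m r \<omega>)" "integrable M (\<lambda>\<omega>. ?g \<omega> * cnj (h l k m r \<omega>))"
    using integrable_channel_gain_mult[OF lk m_cell r]
      integrable_cnj[OF integrable_channel_gain_mult[OF lk m_cell r]] by simp_all
  show "integrable M (\<lambda>\<omega>. cnj (h l k m r \<omega>) * ?W \<omega>) \<and> (\<integral>\<omega>. cnj (h l k m r \<omega>) * ?W \<omega> \<partial>M) = 0"
    using integral_mult_channel_residual[OF determined_by_cnj[OF det_h]
        channel_mean(3)[OF lk m_cell r] det_W W(1)] W(2) by simp
  show "integrable M (\<lambda>\<omega>. (?g \<omega> * h l k m r \<omega>) * cnj (?W \<omega>)) \<and>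
      (\<integral>\<omega>. (?g \<omega> * h l k m r \<omega>) * cnj (?W \<omega>) \<partial>M) = 0"
    using integral_mult_channel_residual[OF determined_by_mult[OF det_g det_h] gh(1)
        determined_by_cnj[OF det_W] integrable_cnj[OF W(1)]] W(2) by simp
  show "integrable M (\<lambda>\<omega>. (?g \<omega> * cnj (h l k m r \<omega>)) * ?W \<omega>) \<and>
      (\<integral>\<omega>. (?g \<omega> * cnj (h l k m r \<omega>)) * ?W \<omega> \<partial>M) = 0"
    using integral_mult_channel_residual[OF determined_by_mult[OF det_g determined_by_cnj[OF det_h]]
        gh(2) det_W W(1)] W(2) by simp
qed

lemma residual_inner_uncorrelated:
  shows "integrable M (residual_inner l k m n)" "integral\<^sup>L M (residual_inner l k m n) = 0"
    and "integrable M (\<lambda>\<omega>. channel_gain l k m \<omega> * cnj (residual_inner l k m n \<omega>))"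
    and "(\<integral>\<omega>. channel_gain l k m \<omega> * cnj (residual_inner l k m n \<omega>) \<partial>M) = 0"
    and "integrable M (\<lambda>\<omega>. residual_inner l k m n \<omega> * channel_gain l k m \<omega>)"
    and "(\<integral>\<omega>. residual_inner l k m n \<omega> * channel_gain l k m \<omega> \<partial>M) = 0"
proof -
  let ?W = "est_residual l k m n" and ?g = "channel_gain l k m"
  have expand:
      "?g \<omega> * cnj (residual_inner l k m n \<omega>) = (\<Sum>r<Nt. (?g \<omega> * h l k m r \<omega>) * cnj (?W r \<omega>))"
      "residual_inner l k m n \<omega> * ?g \<omega> = (\<Sum>r<Nt. (?g \<omega> * cnj (h l k m r \<omega>)) * ?W r \<omega>)" for \<omega>
    unfolding residual_inner_def cnj_sum sum_distrib_left sum_distrib_right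
    by (simp_all add: algebra_simps)
  show "integrable M (residual_inner l k m n)" "integral\<^sup>L M (residual_inner l k m n) = 0"
    "integrable M (\<lambda>\<omega>. ?g \<omega> * cnj (residual_inner l k m n \<omega>))"
    "(\<integral>\<omega>. ?g \<omega> * cnj (residual_inner l k m n \<omega>) \<partial>M) = 0"
    "integrable M (\<lambda>\<omega>. residual_inner l k m n \<omega> * ?g \<omega>)"
    "(\<integral>\<omega>. residual_inner l k m n \<omega> * ?g \<omega> \<partial>M) = 0"
    unfolding expand using channel_residual_products unfolding residual_inner_def[abs_def]
    by (auto intro!: Bochner_Integration.integrable_sum simp: Bochner_Integration.integral_sum)
qed

lemma residual_inner_second_moment:
  shows "integrable M (\<lambda>\<omega>. residual_inner l k m n \<omega> * cnj (residual_inner l k m n \<omega>))"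
    and "(\<integral>\<omega>. residual_inner l k m n \<omega> * cnj (residual_inner l k m n \<omega>) \<partial>M) =
           of_nat Nt * complex_of_real (delta L K tau q eta sn m n - (est_coef m n (l, k))\<^sup>2)"
proof -
  let ?W = "est_residual l k m n"
  define D where "D = complex_of_real (delta L K tau q eta sn m n - (est_coef m n (l, k))\<^sup>2)"
  define F where "F r s \<omega> = (cnj (h l k m r \<omega>) * h l k m s \<omega>) * (?W r \<omega> * cnj (?W s \<omega>))" for r s \<omega>
  have terms: "integrable M (F r s) \<and> integral\<^sup>L M (F r s) = (if r = s then D else 0)"
    if "r \<in> {..<Nt}" "s \<in> {..<Nt}" for r s
  proof -
    have rs: "r < Nt" "s < Nt" using that by simp_all
    have "determined_by {Inl (l, k, m)} (\<lambda>\<omega>. cnj (h l k m r \<omega>) * h l k m s \<omega>)"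
      using rs by (auto intro!: determined_by_mult determined_by_cnj determined_by_channel)
    moreover have "determined_by (blocks L K - {Inl (l, k, m)}) (\<lambda>\<omega>. ?W r \<omega> * cnj (?W s \<omega>))"
      using rs by (auto intro!: determined_by_mult determined_by_cnj determined_by_est_residual m_cell)
    ultimately show ?thesis
      unfolding F_def D_def
      using integral_mult_channel_residual[OF _ channel_correlation(1)[OF lk m_cell rs] _
          est_residual_covariance(1)[OF lk mn rs]]
        channel_correlation(2)[OF lk m_cell rs] est_residual_covariance(2)[OF lk mn rs]
      by simp
  qed
  have expand: "residual_inner l k m n \<omega> * cnj (residual_inner l k m n \<omega>) =
      (\<Sum>r<Nt. \<Sum>s<Nt. F r s \<omega>)" for \<omega>
    unfolding residual_inner_def cnj_sum sum_product F_def
    by (intro sum.cong refl) (simp add: algebra_simps)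
  show "integrable M (\<lambda>\<omega>. residual_inner l k m n \<omega> * cnj (residual_inner l k m n \<omega>))"
    unfolding expand using terms by (intro integral_double_sum) blast
  have "(\<integral>\<omega>. residual_inner l k m n \<omega> * cnj (residual_inner l k m n \<omega>) \<partial>M) =
      (\<Sum>r<Nt. \<Sum>s<Nt. if r = s then D else 0)"
    unfolding expand using terms by (subst integral_double_sum(2)) (blast, simp)
  then show "(\<integral>\<omega>. residual_inner l k m n \<omega> * cnj (residual_inner l k m n \<omega>) \<partial>M) = of_nat Nt * D"
    by simp
qed

lemma inner_estimate_moments:
  defines "T \<equiv> \<lambda>\<omega>. \<Sum>r<Nt. cnj (h l k m r \<omega>) * ghat L K Nt tau h nz q eta m n r \<omega>"
    and "c \<equiv> est_coef m n (l, k)" and "d \<equiv> delta L K tau q eta sn m n"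
  shows "integrable M T" "integral\<^sup>L M T = complex_of_real (c * real Nt)"
    and "integrable M (\<lambda>\<omega>. T \<omega> * cnj (T \<omega>))"
    and "(\<integral>\<omega>. T \<omega> * cnj (T \<omega>) \<partial>M) = complex_of_real (c\<^sup>2 * (real Nt)\<^sup>2 + real Nt * d)"
proof -
  let ?g = "channel_gain l k m" and ?Y = "residual_inner l k m n"
  have split: "T \<omega> = complex_of_real c * ?g \<omega> + ?Y \<omega>" for \<omega>
    unfolding T_def c_def channel_gain_def residual_inner_def ghat_split[OF lk mn]
    by (simp add: sum_distrib_left sum.distrib algebra_simps)
  have square: "T \<omega> * cnj (T \<omega>) = complex_of_real (c\<^sup>2) * (?g \<omega> * ?g \<omega>)
      + complex_of_real c * (?g \<omega> * cnj (?Y \<omega>)) + complex_of_real c * (?Y \<omega> * ?g \<omega>)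
      + ?Y \<omega> * cnj (?Y \<omega>)"
    for \<omega> unfolding split by (simp add: algebra_simps power2_eq_square)
  note gain = channel_gain_moments[OF lk m_cell] and Y = residual_inner_uncorrelated
    and YY = residual_inner_second_moment
  show "integrable M T" "integral\<^sup>L M T = complex_of_real (c * real Nt)"
    unfolding split using gain Y by simp_all
  show "integrable M (\<lambda>\<omega>. T \<omega> * cnj (T \<omega>))"
    unfolding square using gain Y YY by simp
  have "(\<integral>\<omega>. T \<omega> * cnj (T \<omega>) \<partial>M) =
      complex_of_real (c\<^sup>2) * (of_nat Nt * of_nat Nt + of_nat Nt)
      + of_nat Nt * complex_of_real (d - c\<^sup>2)"
    unfolding square using gain Y YY by (simp add: c_def d_def)
  also have "\<dots> = complex_of_real (c\<^sup>2 * (real Nt)\<^sup>2 + real Nt * d)"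
    by (simp add: algebra_simps power2_eq_square)
  finally show "(\<integral>\<omega>. T \<omega> * cnj (T \<omega>) \<partial>M) = complex_of_real (c\<^sup>2 * (real Nt)\<^sup>2 + real Nt * d)" .
qed

lemma hHa_moments:
  assumes "Nt > 0"
  defines "X \<equiv> hHa L K Nt tau h nz q eta sn l k m n"
    and "c \<equiv> est_coef m n (l, k)" and "d \<equiv> delta L K tau q eta sn m n"
  shows "integrable M X" "integrable M (\<lambda>\<omega>. X \<omega> * cnj (X \<omega>))"
    and "(cmod (integral\<^sup>L M X))\<^sup>2 = c\<^sup>2 * real Nt / d"
    and "(\<integral>\<omega>. (cmod (X \<omega>))\<^sup>2 \<partial>M) = c\<^sup>2 * real Nt / d + 1"
proof -
  define T where "T \<omega> = (\<Sum>r<Nt. cnj (h l k m r \<omega>) * ghat L K Nt tau h nz q eta m n r \<omega>)" for \<omega>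
  note moments = inner_estimate_moments[folded T_def c_def d_def]
  define s where "s = sqrt (real Nt * d)"
  have d: "d \<ge> 1" unfolding d_def by (rule delta_ge_1[OF mn])
  have s: "s * s = real Nt * d" "s > 0" unfolding s_def using assms(1) d by simp_all
  have X: "X = (\<lambda>\<omega>. T \<omega> / complex_of_real s)"
    unfolding X_def hHa_def[abs_def] precoder_def T_def s_def d_def
    by (simp add: sum_divide_distrib)
  have XX: "X \<omega> * cnj (X \<omega>) = (T \<omega> * cnj (T \<omega>)) / complex_of_real (s * s)" for \<omega>
    unfolding X by simp
  show "integrable M X" "integrable M (\<lambda>\<omega>. X \<omega> * cnj (X \<omega>))"
    unfolding X XX using moments by simp_all
  have "integral\<^sup>L M X = complex_of_real (c * real Nt / s)"
    unfolding X using moments by simp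
  then have "(cmod (integral\<^sup>L M X))\<^sup>2 = (c * real Nt / s)\<^sup>2"
    by (simp only: norm_of_real power2_abs)
  also have "\<dots> = c\<^sup>2 * real Nt / d"
    using s d by (simp add: power_divide power_mult_distrib power2_eq_square field_simps)
  finally show "(cmod (integral\<^sup>L M X))\<^sup>2 = c\<^sup>2 * real Nt / d" .
  have "complex_of_real (\<integral>\<omega>. (cmod (X \<omega>))\<^sup>2 \<partial>M) = (\<integral>\<omega>. X \<omega> * cnj (X \<omega>) \<partial>M)"
    unfolding integral_complex_of_real[symmetric] complex_norm_square ..
  also have "\<dots> = complex_of_real ((c\<^sup>2 * (real Nt)\<^sup>2 + real Nt * d) / (s * s))"
    unfolding XX using moments by simp
  finally have "(\<integral>\<omega>. (cmod (X \<omega>))\<^sup>2 \<partial>M) = (c\<^sup>2 * (real Nt)\<^sup>2 + real Nt * d) / (s * s)"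
    by (simp only: of_real_eq_iff)
  also have "\<dots> = c\<^sup>2 * real Nt / d + 1"
    using s d assms(1) by (simp add: field_simps power2_eq_square)
  finally show "(\<integral>\<omega>. (cmod (X \<omega>))\<^sup>2 \<partial>M) = c\<^sup>2 * real Nt / d + 1" .
qed

end

end

section \<open>The SINR\<close>

lemma (in prob_space) cvar_eq:
  fixes X :: "'a \<Rightarrow> complex"
  assumes "integrable M X" "integrable M (\<lambda>\<omega>. X \<omega> * cnj (X \<omega>))"
  shows "cvar M X = (\<integral>\<omega>. (cmod (X \<omega>))\<^sup>2 \<partial>M) - (cmod (integral\<^sup>L M X))\<^sup>2"
proof -
  let ?\<mu> = "integral\<^sup>L M X"
  have square: "complex_of_real ((cmod (X \<omega> - ?\<mu>))\<^sup>2) =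
      X \<omega> * cnj (X \<omega>) - X \<omega> * cnj ?\<mu> - ?\<mu> * cnj (X \<omega>) + ?\<mu> * cnj ?\<mu>" for \<omega>
    unfolding complex_norm_square by (simp add: algebra_simps)
  have "complex_of_real (cvar M X) = (\<integral>\<omega>. complex_of_real ((cmod (X \<omega> - ?\<mu>))\<^sup>2) \<partial>M)"
    unfolding cvar_def by (rule integral_complex_of_real[symmetric])
  also have "\<dots> = (\<integral>\<omega>. X \<omega> * cnj (X \<omega>) \<partial>M) - ?\<mu> * cnj ?\<mu>"
    unfolding square using assms by (simp add: prob_space)
  also have "\<dots> = complex_of_real ((\<integral>\<omega>. (cmod (X \<omega>))\<^sup>2 \<partial>M) - (cmod ?\<mu>)\<^sup>2)"
    unfolding of_real_diff complex_norm_square integral_complex_of_real[symmetric] by simp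
  finally show ?thesis by (simp only: of_real_eq_iff)
qed

lemma sinr_rearrange:
  fixes N d B Q S w :: real
  assumes "N > 0"
  shows "N / d * B / (1 * B + (N * Q + S) + w) = B / (d * (Q + 1 / N * ((B + S) + w)))"
proof -
  have "Q + 1 / N * ((B + S) + w) = (B + N * Q + S + w) / N"
    using assms by (simp add: field_simps)
  then show ?thesis
    using assms by (simp add: algebra_simps)
qed

lemma (in massive_mimo) interference_power_eq:
  fixes beta :: "nat \<Rightarrow> nat \<Rightarrow> nat \<Rightarrow> real" and P :: "nat \<Rightarrow> nat \<Rightarrow> real"
  assumes lk: "(l, k) \<in> users L K" and "Nt > 0"
  shows "(\<Sum>(m, n)\<in>users L K - {(l, k)}.
            (\<integral>\<omega>. (cmod (hHa L K Nt tau h nz q eta sn l k m n \<omega>))\<^sup>2 \<partial>M) * beta l k m * P m n) =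
         real Nt * (\<Sum>(m, n)\<in>users L K - {(l, k)}. (rho tau q l k m n)\<^sup>2 * (eta l k m)\<^sup>2 *
            beta l k m * P m n / delta L K tau q eta sn m n)
         + (\<Sum>(m, n)\<in>users L K - {(l, k)}. beta l k m * P m n)"
proof -
  have cross: "(\<integral>\<omega>. (cmod (hHa L K Nt tau h nz q eta sn l k m n \<omega>))\<^sup>2 \<partial>M) =
      real Nt * ((rho tau q l k m n)\<^sup>2 * (eta l k m)\<^sup>2 / delta L K tau q eta sn m n) + 1"
    if "(m, n) \<in> users L K" for m n
    using hHa_moments(4)[OF lk that \<open>Nt > 0\<close>] by (simp add: est_coef_def power_mult_distrib mult_ac)
  have "(\<Sum>(m, n)\<in>users L K - {(l, k)}.
          (\<integral>\<omega>. (cmod (hHa L K Nt tau h nz q eta sn l k m n \<omega>))\<^sup>2 \<partial>M) * beta l k m * P m n) =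
      (\<Sum>(m, n)\<in>users L K - {(l, k)}. real Nt * ((rho tau q l k m n)\<^sup>2 * (eta l k m)\<^sup>2 *
          beta l k m * P m n / delta L K tau q eta sn m n) + beta l k m * P m n)"
    by (intro sum.cong refl) (auto simp: cross algebra_simps)
  then show ?thesis
    by (simp add: sum.distrib sum_distrib_left case_prod_unfold)
qed

theorem lemma1:
  fixes M :: "'a measure" and L K Nt tau :: nat
    and h :: "nat \<Rightarrow> nat \<Rightarrow> nat \<Rightarrow> nat \<Rightarrow> 'a \<Rightarrow> complex"
    and nz :: "nat \<Rightarrow> nat \<Rightarrow> 'a \<Rightarrow> complex"
    and sn :: "nat \<Rightarrow> real"
    and q :: "nat \<Rightarrow> nat \<Rightarrow> nat \<Rightarrow> real"
    and eta beta :: "nat \<Rightarrow> nat \<Rightarrow> nat \<Rightarrow> real"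
    and P :: "nat \<Rightarrow> nat \<Rightarrow> real" and sw2 :: real and l k :: nat
  assumes "prob_space M"
    and "L > 0" and "K > 0" and "Nt > 0" and "tau > 0"
    and indep: "prob_space.indep_vars M (block_space Nt tau) (block_rv Nt tau h nz) (blocks L K)"
    and chan: "\<forall>i\<in>{1..L}. \<forall>j\<in>{1..K}. \<forall>m\<in>{1..L}.
        distr M (Pi\<^sub>M {..<Nt} (\<lambda>_. borel)) (\<lambda>\<omega>. restrict (\<lambda>r. h i j m r \<omega>) {..<Nt})
          = Pi\<^sub>M {..<Nt} (\<lambda>_. cn_std)"
    and noise_mean: "\<forall>m\<in>{1..L}. \<forall>a<tau * Nt.
        integrable M (nz m a) \<and> (\<integral>\<omega>. nz m a \<omega> \<partial>M) = 0"
    and noise_cov: "\<forall>m\<in>{1..L}. \<forall>a<tau * Nt. \<forall>b<tau * Nt.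
        integrable M (\<lambda>\<omega>. nz m a \<omega> * cnj (nz m b \<omega>)) \<and>
        (\<integral>\<omega>. nz m a \<omega> * cnj (nz m b \<omega>) \<partial>M) = (if a = b then complex_of_real ((sn m)\<^sup>2) else 0)"
    and pilots: "\<forall>i\<in>{1..L}. \<forall>j\<in>{1..K}. (\<Sum>t<tau. (q i j t)\<^sup>2) = 1"
    and eta_nonneg: "\<forall>i\<in>{1..L}. \<forall>j\<in>{1..K}. \<forall>m\<in>{1..L}. eta i j m \<ge> 0"
    and eta_own: "\<forall>i\<in>{1..L}. \<forall>j\<in>{1..K}. eta i j i = 1"
    and beta_pos: "\<forall>i\<in>{1..L}. \<forall>j\<in>{1..K}. \<forall>m\<in>{1..L}. beta i j m > 0"
    and P_pos: "\<forall>m\<in>{1..L}. \<forall>n\<in>{1..K}. P m n > 0"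
    and "sw2 \<ge> 0"
    and "l \<in> {1..L}" and "k \<in> {1..K}"
  shows "sinr M L K Nt tau h nz q eta sn beta P sw2 l k =
     beta l k l * P l k /
     (delta L K tau q eta sn l k *
       ((\<Sum>(m, n)\<in>users L K - {(l, k)}.
           (rho tau q l k m n)\<^sup>2 * (eta l k m)\<^sup>2 * beta l k m * P m n / delta L K tau q eta sn m n)
        + 1 / real Nt * ((\<Sum>m=1..L. \<Sum>n=1..K. beta l k m * P m n) + sw2)))"
proof -
  interpret massive_mimo M L K Nt tau h nz sn q eta
    using assms(1) indep chan noise_mean noise_cov pilots eta_own by (rule massive_mimo.intro)
  have lk: "(l, k) \<in> users L K" using assms by simp
  let ?U = "users L K - {(l, k)}" and ?d = "delta L K tau q eta sn"
  note own = hHa_moments[OF lk lk \<open>Nt > 0\<close>, unfolded est_coef_own[OF lk]]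
  let ?Q = "\<Sum>(m, n)\<in>?U. (rho tau q l k m n)\<^sup>2 * (eta l k m)\<^sup>2 * beta l k m * P m n / ?d m n"
    and ?S = "\<Sum>(m, n)\<in>?U. beta l k m * P m n" and ?B = "beta l k l * P l k"
  have total: "(\<Sum>m=1..L. \<Sum>n=1..K. beta l k m * P m n) = ?B + ?S"
    using sum.remove[OF finite_users lk, of "\<lambda>(m, n). beta l k m * P m n"] by (simp add: sum_users)
  have "sinr M L K Nt tau h nz q eta sn beta P sw2 l k =
      real Nt / ?d l k * ?B / (1 * ?B + (real Nt * ?Q + ?S) + sw2)"
    unfolding sinr_def own(3) cvar_eq[OF own(1,2)] own(4) interference_power_eq[OF lk \<open>Nt > 0\<close>]
    by (simp add: mult.assoc)
  also have "\<dots> = ?B / (?d l k * (?Q + 1 / real Nt * ((?B + ?S) + sw2)))"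
    using \<open>Nt > 0\<close> by (intro sinr_rearrange) simp
  finally show ?thesis
    unfolding total .
qed

end
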